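(* Fix integers $n,d,k,L\ge1$. Consider the normalized linear Transformer acting on $Z_l\in\mathbb{R}^{(d+k)\times n}$ by $$\hat Z_{l+1}=Z_l+W^V_l Z_l Z_l^\top (W^Q_l)^\top W^K_l Z_l+W^R_l Z_l,\qquad Z_{l+1}=\mathrm{normalize}(\hat Z_{l+1}),$$ with weights in $\mathbb{R}^{(d+k)\times(d+k)}$, where $\mathrm{normalize}$ replaces each row $j\in\{d+1,\dots,d+k\}$ of its argument by that row divided by its Euclidean norm (and leaves rows $1,\dots,d$ unchanged). Write $Z_l^\top=\begin{bmatrix}B_l, & \Phi_l\end{bmatrix}$ with $B_l\in\mathbb{R}^{n\times d}$, $\Phi_l\in\mathbb{R}^{n\times k}$, and initialize $B_0=B$, the incidence matrix of a graph, and $\Phi_0$ an arbitrary matrix of full column rank. Then there exists a choice of $W^V,W^Q,W^K,W^R$ such that every $k+1$ consecutive layers of the Transformer implement one iteration of subspace iteration for the Laplacian $\mathcal{L}=BB^\top$ (namely $\Phi\mapsto \mathrm{QR}(\mathcal{L}\Phi)$, where $\mathrm{QR}(M)$ is the $Q$ factor of a QR decomposition of $M$). Consequently, the output $\Phi_L$ of an $L$-layer Transformer approximates the top-$k$ eigenvectors of $\mathcal{L}$ to the same accuracy as $L/(k+1)$ steps of subspace iteration started from $\Phi_0$.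
   Context: A graph has $n$ vertices, $d$ edges and positive edge resistances $r_j$; graphs are connected. With an arbitrary edge orientation, the incidence matrix $B\in\mathbb{R}^{n\times d}$ has $B_{ij}=-1/\sqrt{r_j}$ if $e_j$ leaves vertex $i$, $+1/\sqrt{r_j}$ if it enters vertex $i$, and $0$ otherwise; $\mathcal{L}=BB^\top$. Subspace iteration (block power method): start from $\Phi_0\in\mathbb{R}^{n\times k}$ of full column rank and repeat $\hat\Phi_{i+1}=\mathcal{L}\Phi_i$, $\Phi_{i+1}=\mathrm{QR}(\hat\Phi_{i+1})$. *)

theory Defs
  imports "Jordan_Normal_Form.Matrix"
begin

definition graph_edges :: "nat \<Rightarrow> (nat \<Rightarrow> nat) \<Rightarrow> (nat \<Rightarrow> nat) \<Rightarrow> (nat \<times> nat) set" where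
  "graph_edges d src tgt = {(src j, tgt j) | j. j < d} \<union> {(tgt j, src j) | j. j < d}"

definition is_conn_graph :: "nat \<Rightarrow> nat \<Rightarrow> (nat \<Rightarrow> nat) \<Rightarrow> (nat \<Rightarrow> nat) \<Rightarrow> (nat \<Rightarrow> real) \<Rightarrow> bool" where
  "is_conn_graph n d src tgt r \<longleftrightarrow>
     (\<forall>j<d. src j < n \<and> tgt j < n \<and> src j \<noteq> tgt j \<and> r j > 0) \<and>
     (\<forall>u<n. \<forall>v<n. (u, v) \<in> (graph_edges d src tgt)\<^sup>*)"

definition incidence_mat :: "nat \<Rightarrow> nat \<Rightarrow> (nat \<Rightarrow> nat) \<Rightarrow> (nat \<Rightarrow> nat) \<Rightarrow> (nat \<Rightarrow> real) \<Rightarrow> real mat" where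
  "incidence_mat n d src tgt r = mat n d (\<lambda>(i, j).
      if i = src j then - 1 / sqrt (r j) else if i = tgt j then 1 / sqrt (r j) else 0)"

definition full_col_rank :: "real mat \<Rightarrow> bool" where
  "full_col_rank M \<longleftrightarrow>
     (\<forall>x \<in> carrier_vec (dim_col M). M *\<^sub>v x = 0\<^sub>v (dim_row M) \<longrightarrow> x = 0\<^sub>v (dim_col M))"

text \<open>QR decomposition M = Q R with Q having orthonormal columns and R upper triangular
  with positive diagonal; QR_Q M is its (unique, for full column rank M) Q factor.\<close>

definition is_QR :: "real mat \<Rightarrow> real mat \<Rightarrow> real mat \<Rightarrow> bool" where
  "is_QR M Q R \<longleftrightarrow> Q \<in> carrier_mat (dim_row M) (dim_col M) \<and>
     R \<in> carrier_mat (dim_col M) (dim_col M) \<and>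
     transpose_mat Q * Q = 1\<^sub>m (dim_col M) \<and>
     (\<forall>i<dim_col M. \<forall>j<dim_col M. j < i \<longrightarrow> R $$ (i, j) = 0) \<and>
     (\<forall>i<dim_col M. R $$ (i, i) > 0) \<and>
     M = Q * R"

definition QR_Q :: "real mat \<Rightarrow> real mat" where
  "QR_Q M = (THE Q. \<exists>R. is_QR M Q R)"

primrec subspace_iter :: "real mat \<Rightarrow> real mat \<Rightarrow> nat \<Rightarrow> real mat" where
  "subspace_iter Lap Phi0 0 = Phi0"
| "subspace_iter Lap Phi0 (Suc m) = QR_Q (Lap * subspace_iter Lap Phi0 m)"

text \<open>normalize: rows with (0-based) index \<ge> d are divided by their Euclidean norm.\<close>

definition row_norm :: "real mat \<Rightarrow> nat \<Rightarrow> real" where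
  "row_norm M i = sqrt (\<Sum>j<dim_col M. (M $$ (i, j))\<^sup>2)"

definition normalize_rows :: "nat \<Rightarrow> real mat \<Rightarrow> real mat" where
  "normalize_rows d M = mat (dim_row M) (dim_col M)
      (\<lambda>(i, j). if i < d then M $$ (i, j) else M $$ (i, j) / row_norm M i)"

primrec tf_state :: "nat \<Rightarrow> (nat \<Rightarrow> real mat) \<Rightarrow> (nat \<Rightarrow> real mat) \<Rightarrow> (nat \<Rightarrow> real mat)
    \<Rightarrow> (nat \<Rightarrow> real mat) \<Rightarrow> real mat \<Rightarrow> nat \<Rightarrow> real mat" where
  "tf_state d WV WQ WK WR Z0 0 = Z0"
| "tf_state d WV WQ WK WR Z0 (Suc l) =
     (let Z = tf_state d WV WQ WK WR Z0 l in
      normalize_rows d (Z + WV l * Z * transpose_mat Z * transpose_mat (WQ l) * WK l * Z + WR l * Z))"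

definition init_Z :: "nat \<Rightarrow> nat \<Rightarrow> nat \<Rightarrow> real mat \<Rightarrow> real mat \<Rightarrow> real mat" where
  "init_Z n d k B Phi = transpose_mat (mat n (d + k) (\<lambda>(i, j). if j < d then B $$ (i, j) else Phi $$ (i, j - d)))"

definition B_part :: "nat \<Rightarrow> real mat \<Rightarrow> real mat" where
  "B_part d Z = mat (dim_col Z) d (\<lambda>(i, j). Z $$ (j, i))"

definition Phi_part :: "nat \<Rightarrow> nat \<Rightarrow> real mat \<Rightarrow> real mat" where
  "Phi_part d k Z = mat (dim_col Z) k (\<lambda>(i, j). Z $$ (d + j, i))"

end

theory Submission
  imports Defs
begin

text \<open>Write \<open>Z\<^sup>T = [B, \<Phi>]\<close>. Then \<open>Z Z\<^sup>T\<close> is the Gram matrix of the columns of \<open>B\<close> and \<open>\<Phi>\<close>, so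
  a layer with identity query weight and diagonal value, key and residual weights adds to selected
  rows of \<open>Z\<close> linear combinations of rows with inner products as coefficients, and its row
  normalization normalizes the columns of \<open>\<Phi>\<close>. In every block of \<open>k + 1\<close> layers the first one maps
  \<open>\<Phi>\<close> to the normalized columns of \<open>M = B B\<^sup>T \<Phi>\<close> and the others perform the Gram-Schmidt
  steps, one column each. Gram-Schmidt keeps its iterate \<open>P\<close> tied to \<open>M\<close> by \<open>M = P R\<close> and
  \<open>P = M S\<close> with \<open>R\<close>, \<open>S\<close> upper triangular with positive diagonal; once the columns of \<open>P\<close> are
  orthonormal, this makes \<open>P\<close> the Q factor of \<open>M\<close>, and full column rank keeps every column
  normalization well defined.\<close>

lemma sum_eq_single:
  fixes f :: "nat \<Rightarrow> 'a::comm_monoid_add"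
  assumes "i < k" "\<And>l. l < k \<Longrightarrow> l \<noteq> i \<Longrightarrow> f l = 0"
  shows "(\<Sum>l<k. f l) = f i"
proof -
  have "(\<Sum>l<k. f l) = f i + (\<Sum>l\<in>{..<k} - {i}. f l)"
    using assms(1) by (simp add: sum.remove)
  also have "(\<Sum>l\<in>{..<k} - {i}. f l) = 0"
    using assms(2) by (intro sum.neutral) auto
  finally show ?thesis by simp
qed

lemma sum_lessThan_add:
  fixes g :: "nat \<Rightarrow> 'a::comm_monoid_add"
  shows "(\<Sum>b<d + k. g b) = (\<Sum>b<d. g b) + (\<Sum>j<k. g (d + j))"
  by (induction k) (simp_all add: add.assoc)

definition pos_upper_triangular :: "nat \<Rightarrow> real mat \<Rightarrow> bool" where
  "pos_upper_triangular k A \<longleftrightarrow>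
     A \<in> carrier_mat k k \<and> upper_triangular A \<and> (\<forall>i<k. A $$ (i, i) > 0)"

lemma pos_upper_triangular_carrier: "pos_upper_triangular k A \<Longrightarrow> A \<in> carrier_mat k k"
  by (simp add: pos_upper_triangular_def)

lemma pos_upper_triangular_mat_diag:
  "(\<And>i. i < k \<Longrightarrow> f i > 0) \<Longrightarrow> pos_upper_triangular k (mat_diag k f)"
  by (auto simp: pos_upper_triangular_def mat_diag_def)

lemma pos_upper_triangular_mult:
  assumes A: "pos_upper_triangular k A" and B: "pos_upper_triangular k B"
  shows "pos_upper_triangular k (A * B)"
proof -
  have Ac: "A \<in> carrier_mat k k" and Bc: "B \<in> carrier_mat k k"
    using A B by (auto simp: pos_upper_triangular_def)
  have prod: "(A * B) $$ (i, j) = (\<Sum>l<k. A $$ (i, l) * B $$ (l, j))" if "i < k" "j < k" for i j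
    using Ac Bc that by (simp add: scalar_prod_def atLeast0LessThan)
  have vanish: "A $$ (i, l) * B $$ (l, j) = 0" if "i < k" "l < k" "j \<le> i" "l \<noteq> i" for i j l
    using A B that by (cases "l < i") (auto simp: pos_upper_triangular_def upper_triangular_def)
  have diag_term: "(A * B) $$ (i, j) = A $$ (i, i) * B $$ (i, j)" if "j \<le> i" "i < k" for i j
    using that vanish by (simp add: prod sum_eq_single)
  have "(A * B) $$ (i, j) = 0" if "j < i" "i < k" for i j
    using that B diag_term[of j i] by (auto simp: pos_upper_triangular_def upper_triangular_def)
  moreover have "(A * B) $$ (i, i) > 0" if "i < k" for i
    using that A B diag_term[of i i] by (simp add: pos_upper_triangular_def)
  ultimately show ?thesis
    using Ac Bc by (auto simp: pos_upper_triangular_def upper_triangular_def)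
qed

lemma pos_upper_triangular_orthogonal_eq_one:
  assumes T: "pos_upper_triangular k T" and orth: "transpose_mat T * T = 1\<^sub>m k"
  shows "T = 1\<^sub>m k"
proof -
  have Tc: "T \<in> carrier_mat k k"
    using T by (rule pos_upper_triangular_carrier)
  have gram: "(\<Sum>l<k. T $$ (l, i) * T $$ (l, j)) = (if i = j then 1 else 0)"
    if "i < k" "j < k" for i j
    using arg_cong[OF orth, of "\<lambda>A. A $$ (i, j)"] Tc that
    by (simp add: scalar_prod_def atLeast0LessThan)
  have "\<forall>j<k. T $$ (i, j) = (if i = j then 1 else 0)" if "i < k" for i
    using that
  proof (induction i rule: less_induct)
    case (less i)
    have "T $$ (l, i) = 0" if "l < k" "l \<noteq> i" for l
      using less.IH[of l] less.prems T that
      by (cases "l < i") (auto simp: pos_upper_triangular_def upper_triangular_def)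
    then have col_i: "(\<Sum>l<k. T $$ (l, i) * T $$ (l, j)) = T $$ (i, i) * T $$ (i, j)" for j
      using less.prems by (simp add: sum_eq_single)
    have "(T $$ (i, i))\<^sup>2 = 1" "T $$ (i, i) > 0"
      using gram[OF less.prems less.prems] col_i[of i] T less.prems
      by (simp_all add: pos_upper_triangular_def power2_eq_square)
    then have "T $$ (i, i) = 1"
      by (auto simp: power2_eq_1_iff)
    then show ?case
      using gram[OF less.prems] col_i by auto
  qed
  then show ?thesis
    using Tc by (intro eq_matI) auto
qed

lemma is_QR_pos_upper_triangular:
  assumes "is_QR M Q R"
  shows "pos_upper_triangular (dim_col M) R"
proof -
  have "R \<in> carrier_mat (dim_col M) (dim_col M)"
    "\<forall>i<dim_col M. \<forall>j<dim_col M. j < i \<longrightarrow> R $$ (i, j) = 0" "\<forall>i<dim_col M. R $$ (i, i) > 0"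
    using assms unfolding is_QR_def by blast+
  then show ?thesis
    by (auto simp: pos_upper_triangular_def upper_triangular_def)
qed

text \<open>In the uniqueness argument \<open>S\<close> plays the role of \<open>R\<inverse>\<close>, so no triangular matrix
  has to be inverted.\<close>

lemma QR_Q_eqI:
  assumes M: "M \<in> carrier_mat n k" and P: "P \<in> carrier_mat n k"
    and orth: "transpose_mat P * P = 1\<^sub>m k"
    and R: "pos_upper_triangular k R" "M = P * R"
    and S: "pos_upper_triangular k S" "P = M * S"
  shows "QR_Q M = P"
  unfolding QR_Q_def
proof (rule the_equality)
  have "is_QR M P R"
    using M P orth R(1) unfolding is_QR_def R(2)
    by (auto simp: pos_upper_triangular_def upper_triangular_def)
  then show "\<exists>R. is_QR M P R" ..
next
  fix Q assume "\<exists>R. is_QR M Q R"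
  then obtain R' where QR: "is_QR M Q R'" ..
  then have Q: "Q \<in> carrier_mat n k" "transpose_mat Q * Q = 1\<^sub>m k" "M = Q * R'"
    and R': "pos_upper_triangular k R'"
    using M is_QR_pos_upper_triangular[OF QR] by (auto simp: is_QR_def)
  define T where "T = R' * S"
  have T: "pos_upper_triangular k T"
    unfolding T_def using R' S(1) by (rule pos_upper_triangular_mult)
  have Tc: "T \<in> carrier_mat k k"
    using T by (rule pos_upper_triangular_carrier)
  have "P = Q * R' * S"
    using S(2) Q(3) by simp
  also have "\<dots> = Q * T"
    unfolding T_def using Q(1) R' S(1)
    by (intro assoc_mult_mat) (auto simp: pos_upper_triangular_def)
  finally have PQT: "P = Q * T" .
  have "transpose_mat T * T = transpose_mat T * (transpose_mat Q * Q) * T"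
    using Q(2) Tc by simp
  also have "\<dots> = transpose_mat T * (transpose_mat Q * (Q * T))"
    using Q(1) Tc by (simp add: assoc_mult_mat[of _ k k _ k _ k] assoc_mult_mat[of _ k n _ k _ k])
  also have "\<dots> = transpose_mat (Q * T) * (Q * T)"
    using Q(1) Tc by (simp add: transpose_mult assoc_mult_mat[of _ k k _ n _ k])
  also have "\<dots> = 1\<^sub>m k"
    using orth PQT by simp
  finally have "T = 1\<^sub>m k"
    by (rule pos_upper_triangular_orthogonal_eq_one[OF T])
  then show "Q = P"
    using PQT Q(1) by simp
qed

lemma col_scalar_prod_col:
  "i < dim_col A \<Longrightarrow> j < dim_col B \<Longrightarrow> dim_row A = dim_row B \<Longrightarrow>
    col A i \<bullet> col B j = (\<Sum>y<dim_row B. A $$ (y, i) * B $$ (y, j))"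
  by (simp add: scalar_prod_def atLeast0LessThan)

definition col_norm :: "real mat \<Rightarrow> nat \<Rightarrow> real" where
  "col_norm M j = sqrt (col M j \<bullet> col M j)"

definition normalize_cols :: "real mat \<Rightarrow> real mat" where
  "normalize_cols M = mat (dim_row M) (dim_col M) (\<lambda>(i, j). M $$ (i, j) / col_norm M j)"

lemma normalize_cols_carrier[simp]:
  "M \<in> carrier_mat n k \<Longrightarrow> normalize_cols M \<in> carrier_mat n k"
  by (simp add: normalize_cols_def)

lemma col_normalize_cols:
  "j < dim_col M \<Longrightarrow> col (normalize_cols M) j = (1 / col_norm M j) \<cdot>\<^sub>v col M j"
  by (auto simp: normalize_cols_def)

lemma col_norm_pos:
  assumes "i < dim_row M" "j < dim_col M" "M $$ (i, j) \<noteq> 0"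
  shows "col_norm M j > 0"
proof -
  have "(\<Sum>y<dim_row M. M $$ (y, j) * M $$ (y, j)) > 0"
    using assms by (intro sum_pos2[of _ i]) (auto simp: zero_less_mult_iff linorder_neq_iff)
  then show ?thesis
    using assms(2) by (simp add: col_norm_def col_scalar_prod_col)
qed

lemma normalize_cols_eq_mult:
  "M \<in> carrier_mat n k \<Longrightarrow> normalize_cols M = M * mat_diag k (\<lambda>j. 1 / col_norm M j)"
  by (auto simp: normalize_cols_def mat_diag_mult_right)

lemma normalize_cols_mult_col_norm:
  assumes "M \<in> carrier_mat n k" "\<And>j. j < k \<Longrightarrow> col_norm M j \<noteq> 0"
  shows "normalize_cols M * mat_diag k (col_norm M) = M"
proof -
  have "normalize_cols M * mat_diag k (col_norm M)
      = mat n k (\<lambda>(i, j). normalize_cols M $$ (i, j) * col_norm M j)"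
    using assms(1) by (simp add: mat_diag_mult_right)
  then show ?thesis
    using assms by (intro eq_matI) (auto simp: normalize_cols_def)
qed

lemma col_scalar_prod_self_nonneg: "j < dim_col M \<Longrightarrow> col M j \<bullet> col (M :: real mat) j \<ge> 0"
  by (simp add: col_scalar_prod_col sum_nonneg)

lemma scalar_prod_col_normalize_cols:
  assumes "j < dim_col M" "col_norm M j \<noteq> 0"
  shows "col (normalize_cols M) j \<bullet> col (normalize_cols M) j = 1"
  using assms col_scalar_prod_self_nonneg[of j M]
  by (simp add: col_normalize_cols col_norm_def power2_eq_square[symmetric])

definition shear_mat :: "nat \<Rightarrow> nat \<Rightarrow> (nat \<Rightarrow> real) \<Rightarrow> real mat" where
  "shear_mat k t c = mat k k (\<lambda>(i, j). if i = j then 1 else if j = t \<and> i < t then c i else 0)"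

lemma shear_mat_carrier[simp]: "shear_mat k t c \<in> carrier_mat k k"
  and shear_mat_dim[simp]: "dim_row (shear_mat k t c) = k" "dim_col (shear_mat k t c) = k"
  by (simp_all add: shear_mat_def)

lemma pos_upper_triangular_shear_mat: "pos_upper_triangular k (shear_mat k t c)"
  by (auto simp: pos_upper_triangular_def upper_triangular_def shear_mat_def)

lemma index_mult_shear_mat:
  assumes P: "P \<in> carrier_mat n k" and "x < n" "j < k" "t < k"
  shows "(P * shear_mat k t c) $$ (x, j)
    = (if j = t then P $$ (x, t) + (\<Sum>i<t. c i * P $$ (x, i)) else P $$ (x, j))"
proof -
  have prod: "(P * shear_mat k t c) $$ (x, j) = (\<Sum>l<k. P $$ (x, l) * shear_mat k t c $$ (l, j))"
    using assms by (simp add: shear_mat_def scalar_prod_def atLeast0LessThan)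
  show ?thesis
  proof (cases "j = t")
    case True
    have "(\<Sum>l<k. P $$ (x, l) * shear_mat k t c $$ (l, j))
        = (\<Sum>l<Suc t. P $$ (x, l) * shear_mat k t c $$ (l, j))"
      using assms True by (intro sum.mono_neutral_cong_right) (auto simp: shear_mat_def)
    then show ?thesis
      unfolding prod using assms True by (simp add: shear_mat_def mult.commute)
  next
    case False
    then show ?thesis
      unfolding prod using assms by (simp add: shear_mat_def sum_eq_single)
  qed
qed

definition orthogonalize_col :: "nat \<Rightarrow> real mat \<Rightarrow> real mat" where
  "orthogonalize_col t P = mat (dim_row P) (dim_col P) (\<lambda>(x, j).
     if j = t then P $$ (x, t) - (\<Sum>i<t. (col P t \<bullet> col P i) * P $$ (x, i)) else P $$ (x, j))"

lemma orthogonalize_col_dim[simp]: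
  "dim_row (orthogonalize_col t P) = dim_row P" "dim_col (orthogonalize_col t P) = dim_col P"
  by (simp_all add: orthogonalize_col_def)

lemma orthogonalize_col_carrier[simp]:
  "P \<in> carrier_mat n k \<Longrightarrow> orthogonalize_col t P \<in> carrier_mat n k"
  by (simp add: orthogonalize_col_def)

lemma orthogonalize_col_eq_mult:
  assumes P: "P \<in> carrier_mat n k" and "t < k"
  shows "orthogonalize_col t P = P * shear_mat k t (\<lambda>i. - (col P t \<bullet> col P i))"
proof (rule eq_matI)
  fix x j assume "x < dim_row (P * shear_mat k t (\<lambda>i. - (col P t \<bullet> col P i)))"
    "j < dim_col (P * shear_mat k t (\<lambda>i. - (col P t \<bullet> col P i)))"
  with assms show "orthogonalize_col t P $$ (x, j)
      = (P * shear_mat k t (\<lambda>i. - (col P t \<bullet> col P i))) $$ (x, j)"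
    by (subst index_mult_shear_mat[OF P]) (auto simp: orthogonalize_col_def sum_negf)
qed (use assms in auto)

lemma orthogonalize_col_mult_shear_mat:
  assumes P: "P \<in> carrier_mat n k" and "t < k"
  shows "orthogonalize_col t P * shear_mat k t (\<lambda>i. col P t \<bullet> col P i) = P"
proof (rule eq_matI)
  fix x j assume "x < dim_row P" "j < dim_col P"
  with assms show "(orthogonalize_col t P * shear_mat k t (\<lambda>i. col P t \<bullet> col P i)) $$ (x, j)
      = P $$ (x, j)"
    by (subst index_mult_shear_mat[OF orthogonalize_col_carrier[OF P]])
      (auto simp: orthogonalize_col_def)
qed (use assms in auto)

lemma col_orthogonalize_col_other:
  "j < dim_col P \<Longrightarrow> j \<noteq> t \<Longrightarrow> col (orthogonalize_col t P) j = col P j"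
  by (auto simp: orthogonalize_col_def)

lemma orthogonalize_col_orthogonal:
  assumes P: "P \<in> carrier_mat n k" and "t < k" "i < t"
    and orthonormal: "\<And>l. l < t \<Longrightarrow> col P l \<bullet> col P i = (if l = i then 1 else 0)"
  shows "col (orthogonalize_col t P) t \<bullet> col P i = 0"
proof -
  define a where "a l = col P t \<bullet> col P l" for l
  have "col (orthogonalize_col t P) t \<bullet> col P i
      = (\<Sum>y<n. (P $$ (y, t) - (\<Sum>l<t. a l * P $$ (y, l))) * P $$ (y, i))"
    using assms by (subst col_scalar_prod_col) (auto simp: orthogonalize_col_def a_def)
  also have "\<dots> = (\<Sum>y<n. P $$ (y, t) * P $$ (y, i))
      - (\<Sum>l<t. a l * (\<Sum>y<n. P $$ (y, l) * P $$ (y, i)))"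
    by (simp add: left_diff_distrib sum_subtractf sum_distrib_left sum_distrib_right mult.assoc
        sum.swap[of _ "{..<n}"])
  also have "\<dots> = a i - (\<Sum>l<t. a l * (if l = i then 1 else 0))"
  proof -
    have "(\<Sum>y<n. P $$ (y, l) * P $$ (y, i)) = (if l = i then 1 else 0)" if "l < t" for l
      using orthonormal[OF that] assms that by (simp add: col_scalar_prod_col)
    then show ?thesis
      using assms by (simp add: a_def col_scalar_prod_col)
  qed
  also have "\<dots> = 0"
    using assms by (simp add: if_distrib[of "\<lambda>x. _ * x"] cong: if_cong)
  finally show ?thesis .
qed

definition same_col_flag :: "nat \<Rightarrow> real mat \<Rightarrow> real mat \<Rightarrow> bool" where
  "same_col_flag k M P \<longleftrightarrow>
     (\<exists>R. pos_upper_triangular k R \<and> M = P * R) \<and> (\<exists>S. pos_upper_triangular k S \<and> P = M * S)"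

lemma same_col_flag_refl:
  assumes "M \<in> carrier_mat n k"
  shows "same_col_flag k M M"
proof -
  have "pos_upper_triangular k (1\<^sub>m k)" "M = M * 1\<^sub>m k"
    using assms by (simp_all add: pos_upper_triangular_def)
  then show ?thesis
    unfolding same_col_flag_def by blast
qed

lemma same_col_flag_trans:
  assumes M: "M \<in> carrier_mat n k" and P: "P \<in> carrier_mat n k" and X: "X \<in> carrier_mat n k"
    and MP: "same_col_flag k M P" and PX: "same_col_flag k P X"
  shows "same_col_flag k M X"
proof -
  obtain R S R' S' where R: "pos_upper_triangular k R" "M = P * R"
    and S: "pos_upper_triangular k S" "P = M * S"
    and R': "pos_upper_triangular k R'" "P = X * R'"
    and S': "pos_upper_triangular k S'" "X = P * S'"
    using MP PX unfolding same_col_flag_def by blast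
  have "M = X * (R' * R)"
    using R(2) R'(2) assoc_mult_mat[OF X pos_upper_triangular_carrier[OF R'(1)]
        pos_upper_triangular_carrier[OF R(1)]] by simp
  moreover have "X = M * (S * S')"
    using S(2) S'(2) assoc_mult_mat[OF M pos_upper_triangular_carrier[OF S(1)]
        pos_upper_triangular_carrier[OF S'(1)]] by simp
  ultimately show ?thesis
    unfolding same_col_flag_def using R(1) S(1) R'(1) S'(1) pos_upper_triangular_mult by blast
qed

lemma col_norm_pos_same_col_flag:
  assumes M: "M \<in> carrier_mat n k" and rank: "full_col_rank M"
    and flag: "same_col_flag k M X" and j: "j < k"
  shows "col_norm X j > 0"
proof -
  obtain S where S: "pos_upper_triangular k S" "X = M * S"
    using flag unfolding same_col_flag_def by blast
  then have Sc: "S \<in> carrier_mat k k"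
    by (simp add: pos_upper_triangular_carrier)
  have "col S j $ j > 0"
    using S(1) Sc j by (simp add: pos_upper_triangular_def)
  then have "col S j \<noteq> 0\<^sub>v k"
    using j by auto
  then have "M *\<^sub>v col S j \<noteq> 0\<^sub>v n"
    using rank M Sc unfolding full_col_rank_def by auto
  then have "\<exists>i<n. (M *\<^sub>v col S j) $ i \<noteq> 0"
    using M by (metis carrier_matD(1) dim_mult_mat_vec eq_vecI index_zero_vec)
  then obtain i where "i < n" "(M *\<^sub>v col S j) $ i \<noteq> 0" by blast
  then show ?thesis
    unfolding S(2) using M Sc j by (intro col_norm_pos[of i]) auto
qed

lemma same_col_flag_normalize_cols:
  assumes X: "X \<in> carrier_mat n k" and norm_pos: "\<And>j. j < k \<Longrightarrow> col_norm X j > 0"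
  shows "same_col_flag k X (normalize_cols X)"
proof -
  have "X = normalize_cols X * mat_diag k (col_norm X)"
    using normalize_cols_mult_col_norm[OF X] norm_pos by fastforce
  moreover have "normalize_cols X = X * mat_diag k (\<lambda>j. 1 / col_norm X j)"
    using X by (rule normalize_cols_eq_mult)
  moreover have "pos_upper_triangular k (mat_diag k (col_norm X))"
    using norm_pos by (rule pos_upper_triangular_mat_diag)
  moreover have "pos_upper_triangular k (mat_diag k (\<lambda>j. 1 / col_norm X j))"
    by (rule pos_upper_triangular_mat_diag) (simp add: norm_pos)
  ultimately show ?thesis
    unfolding same_col_flag_def by blast
qed

lemma same_col_flag_orthogonalize_col:
  assumes "P \<in> carrier_mat n k" "t < k"
  shows "same_col_flag k P (orthogonalize_col t P)"
  unfolding same_col_flag_def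
  using orthogonalize_col_eq_mult[OF assms] orthogonalize_col_mult_shear_mat[OF assms, symmetric]
    pos_upper_triangular_shear_mat by blast

lemma orthogonal_gram_schmidt_step:
  assumes P: "P \<in> carrier_mat n k" and t: "t < k"
    and unit: "\<And>j. j < k \<Longrightarrow> col P j \<bullet> col P j = 1"
    and orth: "\<And>i j. i < t \<Longrightarrow> j < t \<Longrightarrow> i \<noteq> j \<Longrightarrow> col P i \<bullet> col P j = 0"
    and ij: "i < Suc t" "j < Suc t" "i \<noteq> j"
  shows "col (normalize_cols (orthogonalize_col t P)) i \<bullet> col (normalize_cols (orthogonalize_col t P)) j
    = 0"
proof -
  define X where "X = orthogonalize_col t P"
  define Q where "Q = normalize_cols X"
  have Xc: "X \<in> carrier_mat n k"
    using P by (simp add: X_def)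
  have col_Q_other: "col Q l = col P l" if "l < k" "l \<noteq> t" for l
  proof -
    have "col X l = col P l"
      using P that by (simp add: X_def col_orthogonalize_col_other)
    moreover from this have "col_norm X l = 1"
      using unit[OF that(1)] by (simp add: col_norm_def)
    ultimately show ?thesis
      using Xc that by (simp add: Q_def col_normalize_cols)
  qed
  have orth_t: "col Q t \<bullet> col Q l = 0" if "l < t" for l
  proof -
    have "col X t \<bullet> col P l = 0"
      unfolding X_def using P t that
      by (intro orthogonalize_col_orthogonal) (auto simp: unit orth)
    then show ?thesis
      using Xc P t that col_Q_other[of l] by (simp add: Q_def col_normalize_cols)
  qed
  consider "i < t" "j < t" | "i = t" "j < t" | "i < t" "j = t"
    using ij by linarith
  then have "col Q i \<bullet> col Q j = 0"
  proof cases
    case 1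
    then show ?thesis using col_Q_other orth t ij by simp
  next
    case 2
    then show ?thesis using orth_t by simp
  next
    case 3
    then show ?thesis
      using orth_t[of i] comm_scalar_prod[of "col Q i" "dim_row Q" "col Q t"] by simp
  qed
  then show ?thesis
    by (simp add: Q_def X_def)
qed

definition partial_QR :: "real mat \<Rightarrow> nat \<Rightarrow> real mat \<Rightarrow> bool" where
  "partial_QR M t P \<longleftrightarrow> P \<in> carrier_mat (dim_row M) (dim_col M) \<and>
     (\<forall>j<dim_col M. col P j \<bullet> col P j = 1) \<and>
     (\<forall>i<t. \<forall>j<t. i \<noteq> j \<longrightarrow> col P i \<bullet> col P j = 0) \<and>
     same_col_flag (dim_col M) M P"

lemma partial_QRD:
  assumes "partial_QR M t P" "M \<in> carrier_mat n k"
  shows "P \<in> carrier_mat n k" "\<And>j. j < k \<Longrightarrow> col P j \<bullet> col P j = 1"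
    "\<And>i j. i < t \<Longrightarrow> j < t \<Longrightarrow> i \<noteq> j \<Longrightarrow> col P i \<bullet> col P j = 0"
    "same_col_flag k M P"
  using assms unfolding partial_QR_def by auto

lemma partial_QR_normalize_cols:
  assumes M: "M \<in> carrier_mat n k" and rank: "full_col_rank M"
  shows "partial_QR M 0 (normalize_cols M)"
proof -
  have norm_pos: "col_norm M j > 0" if "j < k" for j
    using col_norm_pos_same_col_flag[OF M rank same_col_flag_refl[OF M] that] .
  have "col (normalize_cols M) j \<bullet> col (normalize_cols M) j = 1" if "j < k" for j
    using M that norm_pos[OF that] by (intro scalar_prod_col_normalize_cols) auto
  then show ?thesis
    using M same_col_flag_normalize_cols[OF M norm_pos] by (simp add: partial_QR_def)
qed

lemma partial_QR_orthogonalize_col: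
  assumes M: "M \<in> carrier_mat n k" and rank: "full_col_rank M"
    and P: "partial_QR M t P" and t: "t < k"
  shows "partial_QR M (Suc t) (normalize_cols (orthogonalize_col t P))"
proof -
  note Pc = partial_QRD(1)[OF P M]
  define X where "X = orthogonalize_col t P"
  have Xc: "X \<in> carrier_mat n k"
    using Pc by (simp add: X_def)
  have MX: "same_col_flag k M X"
    using same_col_flag_trans[OF M Pc Xc partial_QRD(4)[OF P M]]
      same_col_flag_orthogonalize_col[OF Pc t] by (simp add: X_def)
  have norm_pos: "col_norm X j > 0" if "j < k" for j
    using col_norm_pos_same_col_flag[OF M rank MX that] .
  have "same_col_flag k M (normalize_cols X)"
    using same_col_flag_trans[OF M Xc _ MX same_col_flag_normalize_cols[OF Xc norm_pos]] Xc by simp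
  moreover have "col (normalize_cols X) j \<bullet> col (normalize_cols X) j = 1" if "j < k" for j
    using Xc that norm_pos[OF that] by (intro scalar_prod_col_normalize_cols) auto
  moreover have "col (normalize_cols X) i \<bullet> col (normalize_cols X) j = 0"
    if "i < Suc t" "j < Suc t" "i \<noteq> j" for i j
    unfolding X_def using Pc t partial_QRD(2,3)[OF P M] that by (rule orthogonal_gram_schmidt_step)
  ultimately show ?thesis
    using M Xc by (simp add: partial_QR_def X_def)
qed

lemma QR_Q_partial_QR:
  assumes M: "M \<in> carrier_mat n k" and P: "partial_QR M k P"
  shows "QR_Q M = P"
proof -
  note Pc = partial_QRD(1)[OF P M]
  obtain R S where R: "pos_upper_triangular k R" "M = P * R"
    and S: "pos_upper_triangular k S" "P = M * S"
    using partial_QRD(4)[OF P M] unfolding same_col_flag_def by blast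
  have "transpose_mat P * P = 1\<^sub>m k"
  proof (rule eq_matI)
    fix i j assume "i < dim_row (1\<^sub>m k)" "j < dim_col (1\<^sub>m k)"
    then show "(transpose_mat P * P) $$ (i, j) = 1\<^sub>m k $$ (i, j)"
      using Pc partial_QRD(2,3)[OF P M] by (cases "i = j") auto
  qed (use Pc in simp_all)
  then show ?thesis
    using QR_Q_eqI[OF M Pc _ R S] by simp
qed

primrec gram_schmidt :: "nat \<Rightarrow> real mat \<Rightarrow> real mat" where
  "gram_schmidt 0 M = normalize_cols M"
| "gram_schmidt (Suc t) M = normalize_cols (orthogonalize_col t (gram_schmidt t M))"

lemma gram_schmidt_carrier[simp]: "M \<in> carrier_mat n k \<Longrightarrow> gram_schmidt t M \<in> carrier_mat n k"
  by (induction t) simp_all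

lemma QR_Q_eq_gram_schmidt:
  assumes M: "M \<in> carrier_mat n k" and rank: "full_col_rank M"
  shows "QR_Q M = gram_schmidt k M"
proof -
  have "partial_QR M t (gram_schmidt t M)" if "t \<le> k" for t
    using that
  proof (induction t)
    case 0
    then show ?case using partial_QR_normalize_cols[OF M rank] by simp
  next
    case (Suc t)
    then show ?case using partial_QR_orthogonalize_col[OF M rank] by simp
  qed
  then show ?thesis
    using QR_Q_partial_QR[OF M] by simp
qed

lemma init_Z_dim[simp]: "dim_row (init_Z n d k B P) = d + k" "dim_col (init_Z n d k B P) = n"
  by (simp_all add: init_Z_def)

lemma index_init_Z:
  "a < d + k \<Longrightarrow> c < n \<Longrightarrow>
    init_Z n d k B P $$ (a, c) = (if a < d then B $$ (c, a) else P $$ (c, a - d))"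
  by (simp add: init_Z_def)

lemma row_init_Z:
  assumes "B \<in> carrier_mat n d" "P \<in> carrier_mat n k" "a < d + k"
  shows "row (init_Z n d k B P) a = (if a < d then col B a else col P (a - d))"
  using assms by (intro eq_vecI) (auto simp: index_init_Z)

lemma B_part_init_Z: "B \<in> carrier_mat n d \<Longrightarrow> B_part d (init_Z n d k B P) = B"
  by (intro eq_matI) (auto simp: B_part_def index_init_Z)

lemma Phi_part_init_Z: "P \<in> carrier_mat n k \<Longrightarrow> Phi_part d k (init_Z n d k B P) = P"
  by (intro eq_matI) (auto simp: Phi_part_def index_init_Z)

lemma normalize_rows_init_Z:
  assumes B: "B \<in> carrier_mat n d" and P: "P \<in> carrier_mat n k"
  shows "normalize_rows d (init_Z n d k B P) = init_Z n d k B (normalize_cols P)"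
proof (rule eq_matI)
  fix a c assume "a < dim_row (init_Z n d k B (normalize_cols P))"
    "c < dim_col (init_Z n d k B (normalize_cols P))"
  then have a: "a < d + k" and c: "c < n" by simp_all
  have "row_norm (init_Z n d k B P) a = col_norm P (a - d)" if "\<not> a < d"
    using a P that
    by (simp add: row_norm_def col_norm_def col_scalar_prod_col index_init_Z power2_eq_square)
  then show "normalize_rows d (init_Z n d k B P) $$ (a, c)
      = init_Z n d k B (normalize_cols P) $$ (a, c)"
    using a c P by (simp add: normalize_rows_def index_init_Z normalize_cols_def)
qed (simp_all add: normalize_rows_def)

definition attention_layer ::
    "nat \<Rightarrow> real mat \<Rightarrow> real mat \<Rightarrow> real mat \<Rightarrow> real mat \<Rightarrow> real mat \<Rightarrow> real mat" where
  "attention_layer d WV WQ WK WR Z =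
     normalize_rows d (Z + WV * Z * transpose_mat Z * transpose_mat WQ * WK * Z + WR * Z)"

lemma tf_state_Suc:
  "tf_state d WV WQ WK WR Z0 (Suc l)
    = attention_layer d (WV l) (WQ l) (WK l) (WR l) (tf_state d WV WQ WK WR Z0 l)"
  by (simp add: attention_layer_def Let_def)

lemma attention_layer_mat_diag:
  assumes "dim_row Z = D"
  shows "attention_layer d (mat_diag D v) (1\<^sub>m D) (mat_diag D w) (mat_diag D r) Z
    = normalize_rows d (mat D (dim_col Z) (\<lambda>(a, c).
        (1 + r a) * Z $$ (a, c) + v a * (\<Sum>b<D. w b * (row Z a \<bullet> row Z b) * Z $$ (b, c))))"
proof -
  define n where "n = dim_col Z"
  have Z: "Z \<in> carrier_mat D n"
    using assms by (intro carrier_matI) (simp_all add: n_def)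
  have "mat_diag D v * Z * transpose_mat Z = mat D D (\<lambda>(i, b). v i * (row Z i \<bullet> row Z b))"
    using Z by (intro eq_matI)
      (auto simp: mat_diag_mult_left scalar_prod_def sum_distrib_left mult.assoc)
  then have "mat_diag D v * Z * transpose_mat Z * transpose_mat (1\<^sub>m D) * mat_diag D w
      = mat D D (\<lambda>(i, b). v i * (row Z i \<bullet> row Z b)) * mat_diag D w"
    by simp
  also have "\<dots> = mat D D (\<lambda>(i, b). v i * (row Z i \<bullet> row Z b) * w b)"
    by (subst mat_diag_mult_right[of _ D D]) auto
  finally have G: "mat_diag D v * Z * transpose_mat Z * transpose_mat (1\<^sub>m D) * mat_diag D w
      = mat D D (\<lambda>(i, b). v i * (row Z i \<bullet> row Z b) * w b)" .
  show ?thesis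
    unfolding attention_layer_def G n_def[symmetric]
    by (rule arg_cong[of _ _ "normalize_rows d"], rule eq_matI)
      (use Z in \<open>simp_all add: mat_diag_mult_left scalar_prod_def atLeast0LessThan
        sum_distrib_left algebra_simps\<close>)
qed

lemma index_mult_transpose_mult:
  fixes B P :: "'a :: comm_semiring_0 mat"
  assumes "B \<in> carrier_mat n d" "P \<in> carrier_mat n k" "c < n" "j < k"
  shows "(B * transpose_mat B * P) $$ (c, j) = (\<Sum>b<d. (col P j \<bullet> col B b) * B $$ (c, b))"
  using assms
  by (simp add: assoc_mult_mat[of B n d _ n P k] scalar_prod_def atLeast0LessThan sum_distrib_left
      sum_distrib_right mult_ac)

text \<open>Rows \<open>d + j\<close> of \<open>Z\<close> hold column \<open>j\<close> of \<open>\<Phi>\<close>. Layer \<open>l\<close> acts according to its phase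
  \<open>l mod (k + 1)\<close>: phase \<open>0\<close> multiplies \<open>\<Phi>\<close> by \<open>B B\<^sup>T\<close>, phase \<open>t + 1\<close> orthogonalizes column \<open>t\<close>.\<close>

definition WV_subspace_iter :: "nat \<Rightarrow> nat \<Rightarrow> nat \<Rightarrow> real mat" where
  "WV_subspace_iter d k l = mat_diag (d + k) (\<lambda>a.
     case l mod (k + 1) of 0 \<Rightarrow> of_bool (d \<le> a) | Suc t \<Rightarrow> of_bool (a = d + t))"

definition WK_subspace_iter :: "nat \<Rightarrow> nat \<Rightarrow> nat \<Rightarrow> real mat" where
  "WK_subspace_iter d k l = mat_diag (d + k) (\<lambda>b.
     case l mod (k + 1) of 0 \<Rightarrow> of_bool (b < d) | Suc t \<Rightarrow> - of_bool (d \<le> b \<and> b < d + t))"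

definition WR_subspace_iter :: "nat \<Rightarrow> nat \<Rightarrow> nat \<Rightarrow> real mat" where
  "WR_subspace_iter d k l = mat_diag (d + k) (\<lambda>a.
     case l mod (k + 1) of 0 \<Rightarrow> - of_bool (d \<le> a) | Suc t \<Rightarrow> 0)"

abbreviation subspace_iter_layer :: "nat \<Rightarrow> nat \<Rightarrow> nat \<Rightarrow> real mat \<Rightarrow> real mat" where
  "subspace_iter_layer d k l \<equiv> attention_layer d (WV_subspace_iter d k l) (1\<^sub>m (d + k))
     (WK_subspace_iter d k l) (WR_subspace_iter d k l)"

lemma subspace_iter_layer_laplacian:
  assumes l: "l mod (k + 1) = 0" and B: "B \<in> carrier_mat n d" and P: "P \<in> carrier_mat n k"
  shows "subspace_iter_layer d k l (init_Z n d k B P)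
    = init_Z n d k B (normalize_cols (B * transpose_mat B * P))"
proof -
  let ?Z = "init_Z n d k B P"
  have "mat (d + k) n (\<lambda>(a, c). (1 - of_bool (d \<le> a)) * ?Z $$ (a, c)
      + of_bool (d \<le> a) * (\<Sum>b<d + k. of_bool (b < d) * (row ?Z a \<bullet> row ?Z b) * ?Z $$ (b, c)))
    = init_Z n d k B (B * transpose_mat B * P)"
    using B P
    by (intro eq_matI)
      (auto simp: sum_lessThan_add row_init_Z index_init_Z index_mult_transpose_mult
        simp del: index_mult_mat(1) assoc_mult_mat)
  then show ?thesis
    using B P l
    by (simp add: WV_subspace_iter_def WK_subspace_iter_def WR_subspace_iter_def
        attention_layer_mat_diag normalize_rows_init_Z)
qed

lemma subspace_iter_layer_orthogonalize_col:
  assumes l: "l mod (k + 1) = Suc t" and B: "B \<in> carrier_mat n d" and P: "P \<in> carrier_mat n k"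
  shows "subspace_iter_layer d k l (init_Z n d k B P)
    = init_Z n d k B (normalize_cols (orthogonalize_col t P))"
proof -
  let ?Z = "init_Z n d k B P"
  have t: "t < k"
    using l by (metis Suc_eq_plus1 Suc_less_SucD mod_less_divisor zero_less_Suc)
  have restrict: "{..<k} \<inter> {j. j < t} = {..<t}"
    using t by auto
  have "mat (d + k) n (\<lambda>(a, c). ?Z $$ (a, c) + of_bool (a = d + t)
      * (\<Sum>b<d + k. - of_bool (d \<le> b \<and> b < d + t) * (row ?Z a \<bullet> row ?Z b) * ?Z $$ (b, c)))
    = init_Z n d k B (orthogonalize_col t P)"
    using B P t
    by (intro eq_matI)
      (auto simp: sum_lessThan_add row_init_Z index_init_Z orthogonalize_col_def restrict mult.assoc
        sum_negf)
  then show ?thesis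
    using B P l
    by (simp add: WV_subspace_iter_def WK_subspace_iter_def WR_subspace_iter_def
        attention_layer_mat_diag normalize_rows_init_Z)
qed

abbreviation subspace_iter_tf :: "nat \<Rightarrow> nat \<Rightarrow> real mat \<Rightarrow> nat \<Rightarrow> real mat" where
  "subspace_iter_tf d k \<equiv> tf_state d (WV_subspace_iter d k) (\<lambda>_. 1\<^sub>m (d + k))
     (WK_subspace_iter d k) (WR_subspace_iter d k)"

lemma subspace_iter_tf_gram_schmidt:
  assumes Z: "subspace_iter_tf d k Z0 ((k + 1) * m) = init_Z n d k B P"
    and B: "B \<in> carrier_mat n d" and P: "P \<in> carrier_mat n k" and t: "t \<le> k"
  shows "subspace_iter_tf d k Z0 ((k + 1) * m + Suc t)
    = init_Z n d k B (gram_schmidt t (B * transpose_mat B * P))"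
  using t
proof (induction t)
  case 0
  have "subspace_iter_tf d k Z0 ((k + 1) * m + Suc 0)
      = subspace_iter_layer d k ((k + 1) * m) (init_Z n d k B P)"
    unfolding add_Suc_right add_0_right tf_state_Suc Z ..
  also have "\<dots> = init_Z n d k B (normalize_cols (B * transpose_mat B * P))"
    by (rule subspace_iter_layer_laplacian[OF mod_mult_self1_is_0 B P])
  finally show ?case
    by simp
next
  case (Suc t)
  have phase: "((k + 1) * m + Suc t) mod (k + 1) = Suc t"
    unfolding mod_mult_self4 using Suc.prems by simp
  have "subspace_iter_tf d k Z0 ((k + 1) * m + Suc (Suc t))
      = subspace_iter_layer d k ((k + 1) * m + Suc t)
          (subspace_iter_tf d k Z0 ((k + 1) * m + Suc t))"
    using tf_state_Suc[of d _ _ _ _ Z0 "(k + 1) * m + Suc t"] by (simp only: add_Suc_right)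
  also have "\<dots> = init_Z n d k B (gram_schmidt (Suc t) (B * transpose_mat B * P))"
    using Suc B P phase by (simp add: subspace_iter_layer_orthogonalize_col)
  finally show ?case .
qed

lemma subspace_iter_carrier:
  assumes "Lap \<in> carrier_mat n n" "Phi0 \<in> carrier_mat n k"
    and "\<forall>m. full_col_rank (Lap * subspace_iter Lap Phi0 m)"
  shows "subspace_iter Lap Phi0 m \<in> carrier_mat n k"
  using assms by (induction m) (simp_all add: QR_Q_eq_gram_schmidt[of _ n k])

lemma subspace_iter_tf_subspace_iter:
  assumes B: "B \<in> carrier_mat n d" and Phi0: "Phi0 \<in> carrier_mat n k"
    and rank: "\<forall>m. full_col_rank (B * transpose_mat B * subspace_iter (B * transpose_mat B) Phi0 m)"
  shows "subspace_iter_tf d k (init_Z n d k B Phi0) ((k + 1) * m)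
    = init_Z n d k B (subspace_iter (B * transpose_mat B) Phi0 m)"
proof (induction m)
  case 0
  then show ?case by simp
next
  case (Suc m)
  let ?Lap = "B * transpose_mat B" and ?P = "subspace_iter (B * transpose_mat B) Phi0 m"
  have P: "?P \<in> carrier_mat n k"
    using B Phi0 rank by (intro subspace_iter_carrier) auto
  have "?Lap * ?P \<in> carrier_mat n k"
    using B P by (meson mult_carrier_mat transpose_carrier_mat)
  then have "gram_schmidt k (?Lap * ?P) = QR_Q (?Lap * ?P)"
    by (rule QR_Q_eq_gram_schmidt[OF _ rank[rule_format], symmetric])
  moreover have "(k + 1) * Suc m = (k + 1) * m + Suc k"
    by simp
  ultimately show ?case
    using subspace_iter_tf_gram_schmidt[OF Suc.IH B P le_refl] by (simp only: subspace_iter.simps)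
qed

theorem lemma6:
  fixes n d k :: nat
  assumes "n \<ge> 1" and "d \<ge> 1" and "k \<ge> 1"
  shows "\<exists>WV WQ WK WR :: nat \<Rightarrow> real mat.
     (\<forall>l. WV l \<in> carrier_mat (d + k) (d + k) \<and> WQ l \<in> carrier_mat (d + k) (d + k) \<and>
          WK l \<in> carrier_mat (d + k) (d + k) \<and> WR l \<in> carrier_mat (d + k) (d + k)) \<and>
     (\<forall>src tgt r Phi0.
        is_conn_graph n d src tgt r \<longrightarrow> Phi0 \<in> carrier_mat n k \<longrightarrow> full_col_rank Phi0 \<longrightarrow>
        (let B = incidence_mat n d src tgt r; Lap = B * transpose_mat B;
             Z = tf_state d WV WQ WK WR (init_Z n d k B Phi0) in
         (\<forall>m. full_col_rank (Lap * subspace_iter Lap Phi0 m)) \<longrightarrow>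
         (\<forall>m. B_part d (Z ((k + 1) * m)) = B \<and>
              Phi_part d k (Z ((k + 1) * m)) = subspace_iter Lap Phi0 m)))"
proof (intro exI conjI allI impI)
  fix l
  show "WV_subspace_iter d k l \<in> carrier_mat (d + k) (d + k)"
    "1\<^sub>m (d + k) \<in> carrier_mat (d + k) (d + k)"
    "WK_subspace_iter d k l \<in> carrier_mat (d + k) (d + k)"
    "WR_subspace_iter d k l \<in> carrier_mat (d + k) (d + k)"
    by (simp_all add: WV_subspace_iter_def WK_subspace_iter_def WR_subspace_iter_def)
next
  fix src tgt :: "nat \<Rightarrow> nat" and r :: "nat \<Rightarrow> real" and Phi0 :: "real mat"
  assume Phi0: "Phi0 \<in> carrier_mat n k"
  define B where "B = incidence_mat n d src tgt r"
  have B: "B \<in> carrier_mat n d"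
    by (simp add: B_def incidence_mat_def)
  show "let B = incidence_mat n d src tgt r; Lap = B * transpose_mat B;
      Z = subspace_iter_tf d k (init_Z n d k B Phi0) in
    (\<forall>m. full_col_rank (Lap * subspace_iter Lap Phi0 m)) \<longrightarrow>
    (\<forall>m. B_part d (Z ((k + 1) * m)) = B \<and>
      Phi_part d k (Z ((k + 1) * m)) = subspace_iter Lap Phi0 m)"
    unfolding Let_def B_def[symmetric]
    using subspace_iter_tf_subspace_iter[OF B Phi0]
      subspace_iter_carrier[of "B * transpose_mat B" n Phi0 k] B Phi0
    by (simp add: B_part_init_Z Phi_part_init_Z)
qed

end
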